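(* Let $n\ge2$ and let $Q=K(n,n)$ be the complete bipartite quiver with $n$ sources and $n$ sinks and exactly one arrow from each source to each sink. Suppose $m_1+\dots+m_k=q_1+\dots+q_k$ for some $k\ge4$, where all $m_i,q_j$ are (characteristic vectors in $\mathbb{Z}^{Q_1}$ of) perfect matchings of $Q$. Suppose moreover that for some $0\le l\le n-2$ there is a near perfect matching $p$ with $p\le m_1+m_2$ such that $p$ contains $l$ arrows of $q_1$. Then there exist $j\ge3$, perfect matchings $m'_1,m'_2,m'_j$ and a near perfect matching $p'$ such that $m_1+m_2+m_j=m'_1+m'_2+m'_j$, $p'\le m'_1+m'_2$, and $p'$ contains $l+1$ arrows of $q_1$.
   Context: A perfect matching of $K(n,n)$ is a set of $n$ arrows covering each vertex exactly once; a near perfect matching is a set of $n-1$ pairwise disjoint arrows (covering all vertices except one source and one sink). Matchings are identified with their characteristic vectors in $\mathbb{Z}_{\ge0}^{Q_1}$, and $\le$ denotes the componentwise partial order on $\mathbb{Z}^{Q_1}$. *)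

theory Defs
  imports Main
begin

text \<open>The complete bipartite quiver K(n,n): sources 0..n-1, sinks 0..n-1,
  one arrow (i,j) from source i to sink j. Subsets of arrows are identified
  with their characteristic vectors in Z^{Q_1}.\<close>

definition arrows :: "nat \<Rightarrow> (nat \<times> nat) set" where
  "arrows n = {0..<n} \<times> {0..<n}"

definition disjoint_arrows :: "(nat \<times> nat) set \<Rightarrow> bool" where
  "disjoint_arrows M \<longleftrightarrow>
     (\<forall>a\<in>M. \<forall>b\<in>M. a \<noteq> b \<longrightarrow> fst a \<noteq> fst b \<and> snd a \<noteq> snd b)"

definition perfect_matching :: "nat \<Rightarrow> (nat \<times> nat) set \<Rightarrow> bool" where
  "perfect_matching n M \<longleftrightarrow> M \<subseteq> arrows n \<and>
     (\<forall>i<n. \<exists>!j. (i, j) \<in> M) \<and> (\<forall>j<n. \<exists>!i. (i, j) \<in> M)"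

definition near_perfect_matching :: "nat \<Rightarrow> (nat \<times> nat) set \<Rightarrow> bool" where
  "near_perfect_matching n P \<longleftrightarrow> P \<subseteq> arrows n \<and> card P = n - 1 \<and> disjoint_arrows P"

definition chi :: "(nat \<times> nat) set \<Rightarrow> (nat \<times> nat) \<Rightarrow> int" where
  "chi M a = (if a \<in> M then 1 else 0)"

end

theory Submission
  imports Defs
begin

text \<open>Let \<open>s\<close> be the source missed by \<open>p\<close> and \<open>(s, t)\<close> the arrow of \<open>q\<^sub>1\<close> at \<open>s\<close>.
  Exchanging the arrow of \<open>p\<close> into \<open>t\<close> (or, if there is none, any arrow of \<open>p\<close> outside
  \<open>q\<^sub>1\<close>) for \<open>(s, t)\<close> gives a near perfect matching \<open>p'\<close> with one more arrow of \<open>q\<^sub>1\<close>.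
  Since \<open>q\<^sub>1 \<le> m\<^sub>1 + \<dots> + m\<^sub>k\<close>, the arrow \<open>(s, t)\<close> lies in some \<open>m\<^sub>j\<close>, so
  \<open>p' \<le> D = m\<^sub>1 + m\<^sub>2 + m\<^sub>j\<close> for a suitable \<open>j \<ge> 3\<close>. Now \<open>D\<close> is a 3-regular bipartite
  multigraph, and \<open>D - p'\<close> has row sums at least 2 and column sums at most 2, except 3 at
  the sink missed by \<open>p'\<close>; this is enough for Hall's theorem to give a perfect matching
  \<open>m\<^sub>j' \<le> D - p'\<close>. Finally \<open>D - m\<^sub>j' \<ge> p'\<close> is 2-regular, hence (Koenig) a sum
  \<open>m\<^sub>1' + m\<^sub>2'\<close> of perfect matchings.\<close>

lemma chi_eq_of_bool: "chi M a = of_bool (a \<in> M)"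
  by (simp add: chi_def)

lemma chi_nonneg: "0 \<le> chi M a"
  by (simp add: chi_def)

lemma subset_if_chi_le_add:
  assumes "\<forall>a. chi P a \<le> chi A a + chi B a"
  shows "P \<subseteq> A \<union> B"
proof
  fix a assume "a \<in> P"
  then have "1 \<le> chi A a + chi B a" using assms[rule_format, of a] by (simp add: chi_def)
  then show "a \<in> A \<union> B" by (auto simp: chi_def split: if_splits)
qed

lemma chi_sum_eq_member:
  assumes "(\<Sum>i\<in>I. chi (m i) a) = (\<Sum>i\<in>I. chi (q i) a)" "finite I" "i \<in> I" "a \<in> q i"
  obtains i' where "i' \<in> I" "a \<in> m i'"
proof -
  have "chi (q i) a \<le> (\<Sum>i\<in>I. chi (q i) a)"
    using assms(2,3) by (intro member_le_sum) (simp_all add: chi_nonneg)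
  with assms(1,4) have "(\<Sum>i\<in>I. chi (m i) a) \<noteq> 0" by (simp add: chi_def)
  then obtain i' where "i' \<in> I" "chi (m i') a \<noteq> 0" by (rule sum.not_neutral_contains_not_neutral)
  then show thesis using that by (simp add: chi_def split: if_splits)
qed

section \<open>Hall's marriage theorem\<close>

definition hall_condition :: "'a set \<Rightarrow> ('a \<Rightarrow> 'b set) \<Rightarrow> bool" where
  "hall_condition I A \<longleftrightarrow> (\<forall>J\<subseteq>I. card J \<le> card (\<Union>(A ` J)))"

lemma hall_condition_subset: "hall_condition I A \<Longrightarrow> J \<subseteq> I \<Longrightarrow> hall_condition J A"
  by (auto simp: hall_condition_def)

lemma hall_condition_remove_critical:
  assumes hall: "hall_condition I A" and fin: "finite I" "\<forall>i\<in>I. finite (A i)"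
    and J: "J \<subseteq> I" "card (\<Union>(A ` J)) = card J"
  shows "hall_condition (I - J) (\<lambda>i. A i - \<Union>(A ` J))"
  unfolding hall_condition_def
proof (intro allI impI)
  fix K assume K: "K \<subseteq> I - J"
  have finK: "finite K" and finJ: "finite J"
    using K J(1) fin(1) by (auto intro: finite_subset)
  have fin_union: "finite (\<Union>(A ` (K \<union> J)))"
    using K J(1) fin finK finJ by auto
  have "card K + card J = card (K \<union> J)"
    using K finK finJ by (subst card_Un_disjoint) auto
  also have "\<dots> \<le> card (\<Union>(A ` (K \<union> J)))"
    using K J(1) by (intro hall[unfolded hall_condition_def, rule_format]) blast
  also have "\<dots> = card (\<Union>(A ` (K \<union> J)) - \<Union>(A ` J)) + card (\<Union>(A ` J))"
  proof -
    have "\<Union>(A ` J) \<subseteq> \<Union>(A ` (K \<union> J))" by blast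
    with fin_union show ?thesis
      by (simp add: card_Diff_subset card_mono finite_subset)
  qed
  also have "\<Union>(A ` (K \<union> J)) - \<Union>(A ` J) = \<Union>((\<lambda>i. A i - \<Union>(A ` J)) ` K)"
    by auto
  finally show "card K \<le> card (\<Union>((\<lambda>i. A i - \<Union>(A ` J)) ` K))"
    using J(2) by simp
qed

lemma hall_condition_remove_one:
  assumes hall: "hall_condition I A" and fin: "finite I"
    and slack: "\<forall>J\<subseteq>I. J \<noteq> {} \<longrightarrow> J \<noteq> I \<longrightarrow> card J < card (\<Union>(A ` J))"
    and i0: "i0 \<in> I"
  shows "hall_condition (I - {i0}) (\<lambda>i. A i - {x})"
  unfolding hall_condition_def
proof (intro allI impI)
  fix K assume K: "K \<subseteq> I - {i0}"
  show "card K \<le> card (\<Union>((\<lambda>i. A i - {x}) ` K))"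
  proof (cases "K = {}")
    case False
    have "K \<subseteq> I" "K \<noteq> I" using K i0 by auto
    with False have "card K < card (\<Union>(A ` K))" by (simp add: slack)
    then have "card K \<le> card (\<Union>(A ` K)) - 1" by linarith
    also have "\<dots> \<le> card (\<Union>(A ` K) - {x})" by (simp add: card_Diff_singleton_if)
    also have "\<Union>(A ` K) - {x} = \<Union>((\<lambda>i. A i - {x}) ` K)" by blast
    finally show ?thesis .
  qed simp
qed

lemma representatives_glue:
  assumes "J \<subseteq> I" and R1: "\<forall>i\<in>J. R1 i \<in> A i" "inj_on R1 J"
    and R2: "\<forall>i\<in>I - J. R2 i \<in> A i - \<Union>(A ` J)" "inj_on R2 (I - J)"
  shows "\<exists>R. (\<forall>i\<in>I. R i \<in> A i) \<and> inj_on R I"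
proof -
  define R where "R i = (if i \<in> J then R1 i else R2 i)" for i
  have "inj_on R J" using R1(2) by (auto simp: R_def inj_on_def)
  moreover have "inj_on R (I - J)" using R2(2) by (auto simp: R_def inj_on_def)
  moreover have "R ` J \<inter> R ` (I - J) = {}" using R1(1) R2(1) by (auto simp: R_def)
  moreover have "J - (I - J) = J" "J \<union> (I - J) = I" using assms(1) by auto
  ultimately have "inj_on R I" using inj_on_Un[of R J "I - J"] by (metis Diff_idemp)
  moreover have "\<forall>i\<in>I. R i \<in> A i" using R1(1) R2(1) by (simp add: R_def)
  ultimately show ?thesis by blast
qed

text \<open>Halmos and Vaughan's induction: either a proper subfamily \<open>J\<close> is critical, and then
  \<open>J\<close> and the rest with \<open>\<Union>(A ` J)\<close> removed both satisfy Hall's condition, or every proper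
  subfamily has slack, and any element of \<open>A i\<close> may be fixed as the representative of \<open>i\<close>.\<close>
theorem hall_marriage:
  assumes "finite I" "\<forall>i\<in>I. finite (A i)" "hall_condition I A"
  shows "\<exists>R. (\<forall>i\<in>I. R i \<in> A i) \<and> inj_on R I"
  using assms
proof (induction "card I" arbitrary: I A rule: less_induct)
  case less
  note fin = less.prems(1,2) and hall = less.prems(3)
  show ?case
  proof (cases "\<exists>J\<subseteq>I. J \<noteq> {} \<and> J \<noteq> I \<and> card (\<Union>(A ` J)) \<le> card J")
    case True
    then obtain J where J: "J \<subseteq> I" "J \<noteq> {}" "J \<noteq> I" "card (\<Union>(A ` J)) \<le> card J"
      by blast
    have finJ: "finite J" using J(1) fin(1) by (rule finite_subset)
    have "card J \<le> card (\<Union>(A ` J))" using hall J(1) by (simp add: hall_condition_def)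
    with J(4) have critical: "card (\<Union>(A ` J)) = card J" by linarith
    have "card J < card I" using J(1,3) fin(1) by (simp add: psubset_card_mono)
    moreover have "\<forall>i\<in>J. finite (A i)" using J(1) fin(2) by blast
    ultimately obtain R1 where R1: "\<forall>i\<in>J. R1 i \<in> A i" "inj_on R1 J"
      using less.hyps[OF _ finJ _ hall_condition_subset[OF hall J(1)]] by blast
    have "0 < card J" "card J \<le> card I"
      using J(1,2) finJ fin(1) by (auto simp: card_mono)
    then have "card (I - J) < card I"
      using J(1) finJ by (simp add: card_Diff_subset)
    moreover have "finite (I - J)" "\<forall>i\<in>I - J. finite (A i - \<Union>(A ` J))" using fin by auto
    ultimately obtain R2 where R2: "\<forall>i\<in>I - J. R2 i \<in> A i - \<Union>(A ` J)" "inj_on R2 (I - J)"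
      using less.hyps[OF _ _ _ hall_condition_remove_critical[OF hall fin J(1) critical]] by blast
    with J(1) R1 show ?thesis by (rule representatives_glue)
  next
    case False
    then have slack: "\<forall>J\<subseteq>I. J \<noteq> {} \<longrightarrow> J \<noteq> I \<longrightarrow> card J < card (\<Union>(A ` J))"
      by (auto simp: not_le)
    show ?thesis
    proof (cases "I = {}")
      case False
      then obtain i where i: "i \<in> I" by blast
      then have "{i} \<subseteq> I" by simp
      then have "card {i} \<le> card (\<Union>(A ` {i}))" using hall unfolding hall_condition_def by blast
      then obtain x where x: "x \<in> A i" by fastforce
      have "card (I - {i}) < card I" using fin(1) i by (rule card_Diff1_less)
      moreover have "finite (I - {i})" "\<forall>i\<in>I - {i}. finite (A i - {x})" using fin by auto
      ultimately obtain R where R: "\<forall>i'\<in>I - {i}. R i' \<in> A i' - {x}" "inj_on R (I - {i})"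
        using less.hyps[OF _ _ _ hall_condition_remove_one[OF hall fin(1) slack i]] by blast
      have "inj_on (R(i := x)) I"
        using R i by (auto simp: inj_on_def)
      moreover have "\<forall>i'\<in>I. (R(i := x)) i' \<in> A i'" using R(1) x by simp
      ultimately show ?thesis by blast
    qed simp
  qed
qed

definition row_sum :: "nat \<Rightarrow> (nat \<times> nat \<Rightarrow> int) \<Rightarrow> nat \<Rightarrow> int" where
  "row_sum n H i = (\<Sum>j<n. H (i, j))"

definition col_sum :: "nat \<Rightarrow> (nat \<times> nat \<Rightarrow> int) \<Rightarrow> nat \<Rightarrow> int" where
  "col_sum n H j = (\<Sum>i<n. H (i, j))"

lemma row_sum_add [simp]: "row_sum n (\<lambda>a. H a + G a) i = row_sum n H i + row_sum n G i"
  by (simp add: row_sum_def sum.distrib)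

lemma col_sum_add [simp]: "col_sum n (\<lambda>a. H a + G a) j = col_sum n H j + col_sum n G j"
  by (simp add: col_sum_def sum.distrib)

lemma row_sum_diff [simp]: "row_sum n (\<lambda>a. H a - G a) i = row_sum n H i - row_sum n G i"
  by (simp add: row_sum_def sum_subtractf)

lemma col_sum_diff [simp]: "col_sum n (\<lambda>a. H a - G a) j = col_sum n H j - col_sum n G j"
  by (simp add: col_sum_def sum_subtractf)

lemma row_sum_chi: "row_sum n (chi M) i = int (card {j. j < n \<and> (i, j) \<in> M})"
proof -
  have "{..<n} \<inter> {j. (i, j) \<in> M} = {j. j < n \<and> (i, j) \<in> M}" by blast
  then show ?thesis by (simp add: row_sum_def chi_eq_of_bool)
qed

lemma col_sum_chi: "col_sum n (chi M) j = int (card {i. i < n \<and> (i, j) \<in> M})"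
proof -
  have "{..<n} \<inter> {i. (i, j) \<in> M} = {i. i < n \<and> (i, j) \<in> M}" by blast
  then show ?thesis by (simp add: col_sum_def chi_eq_of_bool)
qed

lemma perfect_matching_subset_arrows: "perfect_matching n M \<Longrightarrow> M \<subseteq> arrows n"
  by (simp add: perfect_matching_def)

lemma row_sum_chi_perfect_matching:
  assumes "perfect_matching n M" "i < n"
  shows "row_sum n (chi M) i = 1"
proof -
  have "\<exists>!j. (i, j) \<in> M" using assms by (simp add: perfect_matching_def)
  then obtain j where "(i, j) \<in> M" "\<forall>j'. (i, j') \<in> M \<longrightarrow> j' = j" by blast
  moreover have "j < n"
    using calculation(1) perfect_matching_subset_arrows[OF assms(1)] by (auto simp: arrows_def)
  ultimately have "{j'. j' < n \<and> (i, j') \<in> M} = {j}" by blast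
  then show ?thesis by (simp add: row_sum_chi)
qed

lemma col_sum_chi_perfect_matching:
  assumes "perfect_matching n M" "j < n"
  shows "col_sum n (chi M) j = 1"
proof -
  have "\<exists>!i. (i, j) \<in> M" using assms by (simp add: perfect_matching_def)
  then obtain i where "(i, j) \<in> M" "\<forall>i'. (i', j) \<in> M \<longrightarrow> i' = i" by blast
  moreover have "i < n"
    using calculation(1) perfect_matching_subset_arrows[OF assms(1)] by (auto simp: arrows_def)
  ultimately have "{i'. i' < n \<and> (i', j) \<in> M} = {i}" by blast
  then show ?thesis by (simp add: col_sum_chi)
qed

lemma row_sum_chi_disjoint_arrows:
  assumes "disjoint_arrows P"
  shows "row_sum n (chi P) i \<le> 1"
proof -
  have "j = j'" if "(i, j) \<in> P" "(i, j') \<in> P" for j j'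
  proof (rule ccontr)
    assume "j \<noteq> j'"
    with that assms have "fst (i, j) \<noteq> fst (i, j')" unfolding disjoint_arrows_def by blast
    then show False by simp
  qed
  then have "card {j. j < n \<and> (i, j) \<in> P} \<le> Suc 0"
    by (subst card_le_Suc0_iff_eq) auto
  then show ?thesis by (simp add: row_sum_chi)
qed

lemma col_sum_chi_pos:
  assumes "(i, j) \<in> P" "i < n"
  shows "1 \<le> col_sum n (chi P) j"
proof -
  have "{i} \<subseteq> {i'. i' < n \<and> (i', j) \<in> P}" using assms by blast
  then have "card {i} \<le> card {i'. i' < n \<and> (i', j) \<in> P}"
    by (rule card_mono[rotated]) simp
  then show ?thesis by (simp add: col_sum_chi)
qed

section \<open>Perfect matchings in regular bipartite multigraphs\<close>

lemma perfect_matching_graph: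
  assumes "inj_on R {..<n}" "R ` {..<n} \<subseteq> {..<n}"
  shows "perfect_matching n ((\<lambda>i. (i, R i)) ` {..<n})"
proof -
  have bij: "R ` {..<n} = {..<n}"
    using assms by (intro card_subset_eq) (simp_all add: card_image)
  show ?thesis
    unfolding perfect_matching_def
  proof (intro conjI allI impI)
    show "(\<lambda>i. (i, R i)) ` {..<n} \<subseteq> arrows n" using assms(2) by (auto simp: arrows_def)
  next
    fix i assume "i < n"
    show "\<exists>!j. (i, j) \<in> (\<lambda>i. (i, R i)) ` {..<n}"
      by (rule ex1I[of _ "R i"]) (use \<open>i < n\<close> in auto)
  next
    fix j assume "j < n"
    then obtain i where "i < n" "R i = j" using bij by (metis imageE lessThan_iff)
    then show "\<exists>!i. (i, j) \<in> (\<lambda>i. (i, R i)) ` {..<n}"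
      by (intro ex1I[of _ i]) (auto dest: inj_onD[OF assms(1)])
  qed
qed

text \<open>Column \<open>t\<close> may exceed \<open>d\<close>, but by less than \<open>d\<close>: then the weight on the columns
  \<open>N\<close> met by a set \<open>X\<close> of rows is below \<open>d (|N| + 1)\<close>, which still yields Hall's condition.\<close>
lemma perfect_matching_in_support:
  fixes H :: "nat \<times> nat \<Rightarrow> int" and d :: int
  assumes nonneg: "\<forall>a. 0 \<le> H a" and d: "0 < d"
    and rows: "\<forall>i<n. d \<le> row_sum n H i"
    and cols: "\<forall>j<n. j \<noteq> t \<longrightarrow> col_sum n H j \<le> d" and col_t: "col_sum n H t < 2 * d"
  obtains M where "perfect_matching n M" "\<forall>a\<in>M. 1 \<le> H a"
proof -
  define A where "A i = {j. j < n \<and> 1 \<le> H (i, j)}" for i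
  have "hall_condition {..<n} A"
    unfolding hall_condition_def
  proof (intro allI impI)
    fix X assume X: "X \<subseteq> {..<n}"
    define N where "N = \<Union>(A ` X)"
    have N: "N \<subseteq> {..<n}" by (auto simp: N_def A_def)
    have "d * int (card X) = (\<Sum>i\<in>X. d)" by simp
    also have "\<dots> \<le> (\<Sum>i\<in>X. row_sum n H i)"
      using rows X by (intro sum_mono) auto
    also have "\<dots> = (\<Sum>i\<in>X. \<Sum>j\<in>N. H (i, j))"
    proof (intro sum.cong refl)
      fix i assume i: "i \<in> X"
      have "H (i, j) = 0" if "j \<in> {..<n} - N" for j
      proof -
        have "\<not> 1 \<le> H (i, j)" using that i by (auto simp: N_def A_def)
        then show ?thesis using nonneg[rule_format, of "(i, j)"] by linarith
      qed
      then show "row_sum n H i = (\<Sum>j\<in>N. H (i, j))"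
        unfolding row_sum_def using N by (intro sum.mono_neutral_right) auto
    qed
    also have "\<dots> \<le> (\<Sum>i<n. \<Sum>j\<in>N. H (i, j))"
      using X nonneg by (intro sum_mono2) (auto intro: sum_nonneg)
    also have "\<dots> = (\<Sum>j\<in>N. col_sum n H j)"
      unfolding col_sum_def by (rule sum.swap)
    also have "\<dots> \<le> (\<Sum>j\<in>N. d + (if j = t then d - 1 else 0))"
      using cols col_t N by (intro sum_mono) auto
    also have "\<dots> \<le> d * int (card N) + (d - 1)"
      using d N by (simp add: sum.distrib finite_subset)
    finally have "d * int (card X) < d * (int (card N) + 1)" by (simp add: algebra_simps)
    then have "int (card X) < int (card N) + 1" using d by (simp only: mult_less_cancel_left_pos)
    then show "card X \<le> card (\<Union>(A ` X))" by (simp add: N_def)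
  qed
  then obtain R where R: "\<forall>i\<in>{..<n}. R i \<in> A i" "inj_on R {..<n}"
    using hall_marriage[of "{..<n}" A] by (auto simp: A_def)
  have "perfect_matching n ((\<lambda>i. (i, R i)) ` {..<n})"
    using R by (intro perfect_matching_graph) (auto simp: A_def)
  moreover have "\<forall>a\<in>(\<lambda>i. (i, R i)) ` {..<n}. 1 \<le> H a"
    using R(1) by (auto simp: A_def)
  ultimately show ?thesis using that by blast
qed

definition regular_multigraph :: "nat \<Rightarrow> int \<Rightarrow> (nat \<times> nat \<Rightarrow> int) \<Rightarrow> bool" where
  "regular_multigraph n r H \<longleftrightarrow> (\<forall>a. 0 \<le> H a) \<and> (\<forall>a. a \<notin> arrows n \<longrightarrow> H a = 0) \<and>
     (\<forall>i<n. row_sum n H i = r) \<and> (\<forall>j<n. col_sum n H j = r)"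

lemma regular_multigraph_chi: "perfect_matching n M \<Longrightarrow> regular_multigraph n 1 (chi M)"
  using perfect_matching_subset_arrows[of n M]
  by (auto simp: regular_multigraph_def chi_nonneg chi_def
      row_sum_chi_perfect_matching col_sum_chi_perfect_matching)

lemma regular_multigraph_add:
  "regular_multigraph n r H \<Longrightarrow> regular_multigraph n s G \<Longrightarrow>
    regular_multigraph n (r + s) (\<lambda>a. H a + G a)"
  by (simp add: regular_multigraph_def)

lemma regular_multigraph_diff:
  "regular_multigraph n r H \<Longrightarrow> regular_multigraph n s G \<Longrightarrow> \<forall>a. G a \<le> H a \<Longrightarrow>
    regular_multigraph n (r - s) (\<lambda>a. H a - G a)"
  by (simp add: regular_multigraph_def)

lemma regular_multigraph_zero:
  assumes "regular_multigraph n 0 H"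
  shows "H a = 0"
proof (cases "a \<in> arrows n")
  case True
  then obtain i j where a: "a = (i, j)" "i < n" "j < n" by (auto simp: arrows_def)
  with assms have "(\<Sum>j'<n. H (i, j')) = 0" "\<forall>j'. 0 \<le> H (i, j')"
    by (auto simp: regular_multigraph_def row_sum_def)
  with a show ?thesis by (simp add: sum_nonneg_eq_0_iff)
next
  case False
  then show ?thesis using assms unfolding regular_multigraph_def by blast
qed

lemma regular_multigraph_has_perfect_matching:
  assumes "regular_multigraph n r H" "0 < r"
  obtains M where "perfect_matching n M" "\<forall>a\<in>M. 1 \<le> H a"
proof (rule perfect_matching_in_support[of H r n 0])
  show "col_sum n H 0 < 2 * r"
    using assms by (cases "n = 0") (auto simp: regular_multigraph_def col_sum_def)
qed (use assms in \<open>auto simp: regular_multigraph_def\<close>)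

theorem regular_multigraph_decomposition:
  assumes "regular_multigraph n (int r) H"
  shows "\<exists>M. (\<forall>i<r. perfect_matching n (M i)) \<and> (\<forall>a. H a = (\<Sum>i<r. chi (M i) a))"
  using assms
proof (induction r arbitrary: H)
  case 0
  then show ?case using regular_multigraph_zero by auto
next
  case (Suc r)
  obtain c where c: "perfect_matching n c" "\<forall>a\<in>c. 1 \<le> H a"
    using regular_multigraph_has_perfect_matching[OF Suc.prems] by auto
  have "\<forall>a. chi c a \<le> H a"
    using c(2) Suc.prems by (auto simp: chi_def regular_multigraph_def)
  then have "regular_multigraph n (int r) (\<lambda>a. H a - chi c a)"
    using regular_multigraph_diff[OF Suc.prems regular_multigraph_chi[OF c(1)]] by simp
  then obtain M where M: "\<forall>i<r. perfect_matching n (M i)" "\<forall>a. H a - chi c a = (\<Sum>i<r. chi (M i) a)"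
    using Suc.IH by blast
  have "\<forall>i<Suc r. perfect_matching n ((M(r := c)) i)"
    using M(1) c(1) by (simp add: less_Suc_eq)
  moreover have "\<forall>a. H a = (\<Sum>i<Suc r. chi ((M(r := c)) i) a)"
    using M(2) by (simp add: algebra_simps)
  ultimately show ?case by blast
qed

section \<open>Near perfect matchings\<close>

lemma near_perfect_matching_finite: "near_perfect_matching n p \<Longrightarrow> finite p"
  unfolding near_perfect_matching_def arrows_def
  by (meson finite_SigmaI finite_atLeastLessThan finite_subset)

lemma disjoint_arrows_inj_on:
  assumes "disjoint_arrows P"
  shows "inj_on fst P" "inj_on snd P"
proof -
  have eq: "a = b" if "a \<in> P" "b \<in> P" "fst a = fst b \<or> snd a = snd b" for a b
  proof (rule ccontr)
    assume "a \<noteq> b"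
    with assms that(1,2) have "fst a \<noteq> fst b \<and> snd a \<noteq> snd b"
      unfolding disjoint_arrows_def by blast
    with that(3) show False by blast
  qed
  show "inj_on fst P" "inj_on snd P" by (rule inj_onI; rule eq; simp)+
qed

lemma disjoint_arrows_insert:
  "disjoint_arrows (insert e P) \<longleftrightarrow>
    disjoint_arrows P \<and> (\<forall>c\<in>P. c \<noteq> e \<longrightarrow> fst c \<noteq> fst e \<and> snd c \<noteq> snd e)"
  unfolding disjoint_arrows_def by auto

lemma disjoint_arrows_subset: "disjoint_arrows P \<Longrightarrow> Q \<subseteq> P \<Longrightarrow> disjoint_arrows Q"
  unfolding disjoint_arrows_def by blast

lemma inj_image_misses_one:
  assumes "inj_on f P" "f ` P \<subseteq> {..<n}" "card P = n - 1" "0 < n"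
  obtains t where "t < n" "t \<notin> f ` P" "\<forall>j<n. j \<noteq> t \<longrightarrow> j \<in> f ` P"
proof -
  have "finite (f ` P)" using assms(2) by (rule finite_subset) simp
  moreover have "card (f ` P) = n - 1" using assms(1,3) by (simp add: card_image)
  ultimately have "card ({..<n} - f ` P) = 1" using assms(2,4) by (simp add: card_Diff_subset)
  then obtain t where t: "{..<n} - f ` P = {t}" by (rule card_1_singletonE)
  then have "t \<in> {..<n} - f ` P" by simp
  moreover have "\<forall>j<n. j \<noteq> t \<longrightarrow> j \<in> f ` P" using t by blast
  ultimately show ?thesis using that by blast
qed

lemma near_perfect_matching_image_fst_snd:
  assumes "near_perfect_matching n p"
  shows "fst ` p \<subseteq> {..<n}" "snd ` p \<subseteq> {..<n}"
  using assms by (auto simp: near_perfect_matching_def arrows_def mem_Times_iff)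

lemma near_perfect_matching_uncovered_source:
  assumes "near_perfect_matching n p" "0 < n"
  obtains s where "s < n" "\<forall>j. (s, j) \<notin> p"
proof -
  have "inj_on fst p" "card p = n - 1"
    using assms(1) disjoint_arrows_inj_on(1) by (simp_all add: near_perfect_matching_def)
  then obtain s where "s < n" "s \<notin> fst ` p" "\<forall>i<n. i \<noteq> s \<longrightarrow> i \<in> fst ` p"
    using near_perfect_matching_image_fst_snd(1)[OF assms(1)] assms(2)
    by (elim inj_image_misses_one)
  moreover have "\<forall>j. (s, j) \<notin> p" using \<open>s \<notin> fst ` p\<close> by (metis fst_conv image_eqI)
  ultimately show ?thesis using that by blast
qed

lemma near_perfect_matching_covers_sinks:
  assumes "near_perfect_matching n p" "0 < n"
  obtains t where "t < n" "\<forall>j<n. j \<noteq> t \<longrightarrow> (\<exists>i. (i, j) \<in> p)"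
proof -
  have "inj_on snd p" "card p = n - 1"
    using assms(1) disjoint_arrows_inj_on(2) by (simp_all add: near_perfect_matching_def)
  then obtain t where "t < n" "t \<notin> snd ` p" "\<forall>j<n. j \<noteq> t \<longrightarrow> j \<in> snd ` p"
    using near_perfect_matching_image_fst_snd(2)[OF assms(1)] assms(2)
    by (elim inj_image_misses_one)
  then show ?thesis using that \<open>t < n\<close> by (metis imageE prod.collapse)
qed

lemma near_perfect_matching_exchange:
  assumes p: "near_perfect_matching n p" and x: "x \<in> p" "\<forall>c\<in>p. snd c = t \<longrightarrow> c = x"
    and s: "\<forall>j. (s, j) \<notin> p" and st: "(s, t) \<in> arrows n"
  shows "near_perfect_matching n (insert (s, t) (p - {x}))"
proof -
  have p_arrows: "p \<subseteq> arrows n" and card_p: "card p = n - 1" and dis: "disjoint_arrows p"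
    using p by (simp_all add: near_perfect_matching_def)
  have fin: "finite p" using p by (rule near_perfect_matching_finite)
  have "disjoint_arrows (insert (s, t) (p - {x}))"
    unfolding disjoint_arrows_insert
  proof (intro conjI ballI impI)
    show "disjoint_arrows (p - {x})" using dis by (rule disjoint_arrows_subset) blast
  next
    fix c assume c: "c \<in> p - {x}"
    then show "fst c \<noteq> fst (s, t)" using s by (metis DiffD1 fst_conv prod.collapse)
    show "snd c \<noteq> snd (s, t)" using c x(2) by auto
  qed
  moreover have "card (insert (s, t) (p - {x})) = n - 1"
  proof -
    have "(s, t) \<notin> p" using s by blast
    moreover have "0 < card p" using fin x(1) card_gt_0_iff by blast
    ultimately show ?thesis using fin x(1) card_p by (simp add: card_Diff_singleton)
  qed
  moreover have "insert (s, t) (p - {x}) \<subseteq> arrows n" using p_arrows st by blast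
  ultimately show ?thesis by (simp add: near_perfect_matching_def)
qed

lemma near_perfect_matching_augment:
  assumes p: "near_perfect_matching n p" and q: "perfect_matching n q"
    and fewer: "card (p \<inter> q) < n - 1"
  obtains e p' where "e \<in> q" "p' \<subseteq> insert e p" "near_perfect_matching n p'"
    "card (p' \<inter> q) = Suc (card (p \<inter> q))"
proof -
  have card_p: "card p = n - 1" and dis: "disjoint_arrows p"
    using p by (simp_all add: near_perfect_matching_def)
  have "0 < n" using fewer by linarith
  then obtain s where s: "s < n" "\<forall>j. (s, j) \<notin> p"
    using p by (elim near_perfect_matching_uncovered_source)
  have "\<exists>!j. (s, j) \<in> q" using q s(1) by (simp add: perfect_matching_def)
  then obtain t where t: "(s, t) \<in> q" by (elim ex1E) blast
  then have st: "(s, t) \<in> arrows n" using perfect_matching_subset_arrows[OF q] by blast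
  then have "\<exists>!i. (i, t) \<in> q" using q by (simp add: perfect_matching_def arrows_def)
  then have only_s: "i = s" if "(i, t) \<in> q" for i
    using t that by (elim ex1E) blast
  obtain x where x: "x \<in> p" "x \<notin> q" "\<forall>c\<in>p. snd c = t \<longrightarrow> c = x"
  proof (cases "\<exists>i. (i, t) \<in> p")
    case True
    then obtain i where i: "(i, t) \<in> p" by blast
    have "(i, t) \<notin> q" using i s(2) only_s by blast
    moreover have "c = (i, t)" if "c \<in> p" "snd c = t" for c
    proof (rule ccontr)
      assume "c \<noteq> (i, t)"
      with dis that(1) i have "snd c \<noteq> snd (i, t)" unfolding disjoint_arrows_def by blast
      with that(2) show False by simp
    qed
    ultimately show thesis using that i by blast
  next
    case False
    have "p \<inter> q \<noteq> p" using fewer card_p by auto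
    then obtain x where "x \<in> p" "x \<notin> q" by blast
    moreover have "\<forall>c\<in>p. snd c \<noteq> t" using False by (metis prod.collapse)
    ultimately show thesis using that by blast
  qed
  define p' where "p' = insert (s, t) (p - {x})"
  have "near_perfect_matching n p'"
    unfolding p'_def using p x(1,3) s(2) st by (rule near_perfect_matching_exchange)
  moreover have "p' \<inter> q = insert (s, t) (p \<inter> q)" using x(2) t by (auto simp: p'_def)
  then have "card (p' \<inter> q) = Suc (card (p \<inter> q))"
    using near_perfect_matching_finite[OF p] s(2) by simp
  moreover have "p' \<subseteq> insert (s, t) p" by (auto simp: p'_def)
  ultimately show thesis using that t by blast
qed

text \<open>After removing \<open>p\<close>, the sink missed by \<open>p\<close> still has weight \<open>r\<close>, and \<open>r < 2 (r - 1)\<close>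
  is where \<open>3 \<le> r\<close> is needed.\<close>
lemma perfect_matching_avoiding_near_perfect_matching:
  assumes H: "regular_multigraph n r H" "3 \<le> r" and "0 < n"
    and p: "near_perfect_matching n p" "\<forall>a\<in>p. 1 \<le> H a"
  obtains c where "perfect_matching n c" "\<forall>a. chi c a + chi p a \<le> H a"
proof -
  obtain t where t: "t < n" "\<forall>j<n. j \<noteq> t \<longrightarrow> (\<exists>i. (i, j) \<in> p)"
    using p(1) \<open>0 < n\<close> by (elim near_perfect_matching_covers_sinks)
  define G where "G = (\<lambda>a. H a - chi p a)"
  have "\<forall>a. 0 \<le> G a"
    using H(1) p(2) by (auto simp: G_def chi_def regular_multigraph_def)
  moreover have "0 < r - 1" using H(2) by simp
  moreover have "\<forall>i<n. r - 1 \<le> row_sum n G i"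
    using H(1) row_sum_chi_disjoint_arrows[of p n] p(1)
    by (simp add: G_def regular_multigraph_def near_perfect_matching_def)
  moreover have "\<forall>j<n. j \<noteq> t \<longrightarrow> col_sum n G j \<le> r - 1"
  proof (intro allI impI)
    fix j assume j: "j < n" "j \<noteq> t"
    then obtain i where i: "(i, j) \<in> p" using t(2) by blast
    then have "(i, j) \<in> arrows n" using p(1) by (auto simp: near_perfect_matching_def)
    then have "i < n" by (simp add: arrows_def)
    with i have "1 \<le> col_sum n (chi p) j" by (rule col_sum_chi_pos)
    then show "col_sum n G j \<le> r - 1" using H(1) j(1) by (simp add: G_def regular_multigraph_def)
  qed
  moreover have "col_sum n G t < 2 * (r - 1)"
  proof -
    have "0 \<le> col_sum n (chi p) t" by (simp add: col_sum_chi)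
    moreover have "col_sum n H t = r" using H(1) t(1) by (simp add: regular_multigraph_def)
    ultimately show ?thesis using H(2) by (simp add: G_def)
  qed
  ultimately obtain c where c: "perfect_matching n c" "\<forall>a\<in>c. 1 \<le> G a"
    by (elim perfect_matching_in_support)
  have "chi c a + chi p a \<le> H a" for a
  proof -
    have "0 \<le> G a" "a \<in> c \<Longrightarrow> 1 \<le> G a" using c(2) \<open>\<forall>a. 0 \<le> G a\<close> by blast+
    then show ?thesis by (auto simp: G_def chi_def split: if_splits)
  qed
  then show thesis using that c(1) by blast
qed

lemma three_perfect_matchings_rematch:
  assumes m: "perfect_matching n m1" "perfect_matching n m2" "perfect_matching n m3" and "0 < n"
    and p: "near_perfect_matching n p" "p \<subseteq> m1 \<union> m2 \<union> m3"
  obtains m1' m2' m3' where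
    "perfect_matching n m1'" "perfect_matching n m2'" "perfect_matching n m3'"
    "\<forall>a. chi m1 a + chi m2 a + chi m3 a = chi m1' a + chi m2' a + chi m3' a"
    "\<forall>a. chi p a \<le> chi m1' a + chi m2' a"
proof -
  define D where "D = (\<lambda>a. chi m1 a + chi m2 a + chi m3 a)"
  have "regular_multigraph n (1 + 1 + 1) D"
    unfolding D_def using m by (intro regular_multigraph_add regular_multigraph_chi)
  then have D: "regular_multigraph n 3 D" by simp
  have "\<forall>a\<in>p. 1 \<le> D a" using p(2) by (auto simp: D_def chi_def)
  then obtain c where c: "perfect_matching n c" "\<forall>a. chi c a + chi p a \<le> D a"
    using perfect_matching_avoiding_near_perfect_matching[OF D order_refl \<open>0 < n\<close> p(1)] by blast
  have "chi c a \<le> D a" for a using c(2)[rule_format, of a] chi_nonneg[of p a] by linarith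
  then have "regular_multigraph n (int 2) (\<lambda>a. D a - chi c a)"
    using regular_multigraph_diff[OF D regular_multigraph_chi[OF c(1)]] by simp
  then obtain M where M: "\<forall>i<2::nat. perfect_matching n (M i)"
    "\<forall>a. D a - chi c a = (\<Sum>i<2. chi (M i) a)"
    using regular_multigraph_decomposition by blast
  have "perfect_matching n (M 0)" "perfect_matching n (M 1)" using M(1) by simp_all
  moreover have "\<forall>a. D a = chi (M 0) a + chi (M 1) a + chi c a"
    using M(2) by (simp add: numeral_2_eq_2 algebra_simps)
  moreover have "\<forall>a. chi p a \<le> chi (M 0) a + chi (M 1) a"
    using M(2) c(2) by (simp add: numeral_2_eq_2 algebra_simps)
  ultimately show thesis using that c(1) by (simp add: D_def)
qed

theorem lemma9p2:
  fixes n k l :: nat and m q :: "nat \<Rightarrow> (nat \<times> nat) set" and p :: "(nat \<times> nat) set"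
  assumes "n \<ge> 2" and "k \<ge> 4"
    and "\<forall>i\<in>{1..k}. perfect_matching n (m i)"
    and "\<forall>i\<in>{1..k}. perfect_matching n (q i)"
    and "\<forall>a. (\<Sum>i=1..k. chi (m i) a) = (\<Sum>i=1..k. chi (q i) a)"
    and "l \<le> n - 2"
    and "near_perfect_matching n p"
    and "\<forall>a. chi p a \<le> chi (m 1) a + chi (m 2) a"
    and "card (p \<inter> q 1) = l"
  shows "\<exists>j m1' m2' mj' p'. 3 \<le> j \<and> j \<le> k \<and>
           perfect_matching n m1' \<and> perfect_matching n m2' \<and> perfect_matching n mj' \<and>
           near_perfect_matching n p' \<and>
           (\<forall>a. chi (m 1) a + chi (m 2) a + chi (m j) a = chi m1' a + chi m2' a + chi mj' a) \<and>
           (\<forall>a. chi p' a \<le> chi m1' a + chi m2' a) \<and>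
           card (p' \<inter> q 1) = l + 1"
proof -
  have pm: "perfect_matching n (m i)" if "1 \<le> i" "i \<le> k" for i using assms(3) that by simp
  have fewer: "card (p \<inter> q 1) < n - 1" using assms(1,6,9) by linarith
  have q1: "perfect_matching n (q 1)" using assms(2,4) by simp
  obtain e p' where e: "e \<in> q 1" "p' \<subseteq> insert e p" and p': "near_perfect_matching n p'"
    "card (p' \<inter> q 1) = Suc (card (p \<inter> q 1))"
    by (rule near_perfect_matching_augment[OF assms(7) q1 fewer])
  obtain i where i: "i \<in> {1..k}" "e \<in> m i"
    by (rule chi_sum_eq_member[OF assms(5)[rule_format] finite_atLeastAtMost _ e(1)])
      (use assms(2) in simp)
  define j where "j = (if 3 \<le> i then i else 3)"
  have j: "3 \<le> j" "j \<le> k" using i(1) assms(2) by (auto simp: j_def)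
  have "i \<in> {1, 2} \<or> 3 \<le> i" using i(1) by auto
  then have "e \<in> m 1 \<union> m 2 \<union> m j" using i(2) by (auto simp: j_def)
  with e(2) subset_if_chi_le_add[OF assms(8)] have p'_sub: "p' \<subseteq> m 1 \<union> m 2 \<union> m j" by blast
  have pm_1: "perfect_matching n (m 1)" and pm_2: "perfect_matching n (m 2)"
    and pm_j: "perfect_matching n (m j)" using pm assms(2) j by simp_all
  have "0 < n" using assms(1) by simp
  obtain m1' m2' mj' where "perfect_matching n m1'" "perfect_matching n m2'"
    "perfect_matching n mj'"
    "\<forall>a. chi (m 1) a + chi (m 2) a + chi (m j) a = chi m1' a + chi m2' a + chi mj' a"
    "\<forall>a. chi p' a \<le> chi m1' a + chi m2' a"
    by (rule three_perfect_matchings_rematch[OF pm_1 pm_2 pm_j \<open>0 < n\<close> p'(1) p'_sub])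
  moreover have "card (p' \<inter> q 1) = l + 1" using p'(2) assms(9) by simp
  ultimately show ?thesis using j p'(1) by blast
qed

end
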